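(* A sticky tree is determined by its underlying plane tree together with its certificate-counting function: if $(T,\ell)$ and $(T,\ell')$ are sticky trees with the same underlying plane tree $T$ and the same certificate-counting function, then $\ell=\ell'$.
   Context: Sticky trees: a plane tree is a rooted tree in which the children of every node are linearly ordered (left to right). The root has depth $0$, a child of a node of depth $d$ has depth $d+1$. The prefix order is: the root, followed by the prefix order of the subtree of its leftmost child, then of its second child, and so on. $S_u$ denotes the subtree rooted at $u$. A sticky tree is a plane tree $S$ with node set $V$ and a labeling $\ell:V\to\mathbb{N}$ such that: (1) every node $u$ of depth $d$ has $0\le\ell(u)\le d$; (2) every node $u$ of depth $d>0$ has some $v\in S_u$ (possibly $v=u$) with $\ell(v)<d$; (3) for every node $u$ of depth $d$, if some $v\in S_u$ has $\ell(v)=d$, then every node of $S_u$ (including $u$) preceding $v$ in prefix order has label at least $d$. The certificate of a non-root node $u$ of depth $d$ is the first node, in prefix order, of $S_u$ whose label is $<d$. The certificate-counting function $c:V\to\mathbb{N}$ assigns to each node $w$ the number of non-root nodes whose certificate is $w$. *)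

theory Defs
  imports Main
begin

text \<open>Nodes of a tree are identified by their addresses: the list of child indices
  on the path from the root (root = []).  The depth of a node u is length u.\<close>

datatype ptree = Node "ptree list"

function preorder :: "ptree \<Rightarrow> nat list list" where
  "preorder (Node ts) =
     [] # concat (map (\<lambda>i. map (Cons i) (preorder (ts ! i))) [0..<length ts])"
  by pat_completeness auto
termination
proof (relation "measure size")
  fix ts :: "ptree list" and i :: nat
  assume "i \<in> set [0..<length ts]"
  then have "ts ! i \<in> set ts" by simp
  then have "size (ts ! i) \<le> size_list size ts" by (rule size_list_estimation') simp
  then show "(ts ! i, Node ts) \<in> measure size" by simp
qed simp

definition nodes :: "ptree \<Rightarrow> nat list set" where
  "nodes T = set (preorder T)"

definition subtree :: "ptree \<Rightarrow> nat list \<Rightarrow> nat list set" where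
  "subtree T u = {v \<in> nodes T. \<exists>r. v = u @ r}"

definition precedes :: "ptree \<Rightarrow> nat list \<Rightarrow> nat list \<Rightarrow> bool" where
  "precedes T v w \<longleftrightarrow> (\<exists>i j. i < j \<and> j < length (preorder T) \<and>
       preorder T ! i = v \<and> preorder T ! j = w)"

definition sticky :: "ptree \<Rightarrow> (nat list \<Rightarrow> nat) \<Rightarrow> bool" where
  "sticky T l \<longleftrightarrow>
     (\<forall>u\<in>nodes T. l u \<le> length u) \<and>
     (\<forall>u\<in>nodes T. u \<noteq> [] \<longrightarrow> (\<exists>v\<in>subtree T u. l v < length u)) \<and>
     (\<forall>u\<in>nodes T. \<forall>v\<in>subtree T u. l v = length u \<longrightarrow>
         (\<forall>w\<in>subtree T u. precedes T w v \<longrightarrow> l w \<ge> length u))"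

definition certificate :: "ptree \<Rightarrow> (nat list \<Rightarrow> nat) \<Rightarrow> nat list \<Rightarrow> nat list" where
  "certificate T l u = hd (filter (\<lambda>v. v \<in> subtree T u \<and> l v < length u) (preorder T))"

definition cert_count :: "ptree \<Rightarrow> (nat list \<Rightarrow> nat) \<Rightarrow> nat list \<Rightarrow> nat" where
  "cert_count T l w = card {u \<in> nodes T. u \<noteq> [] \<and> certificate T l u = w}"

end

theory Submission
  imports Defs
begin

text \<open>Compare two sticky labelings at the first node w, in prefix order, where they differ, say
  l w < l' w. Every node certified by w under l' is also certified by w under l, since
  the labels agree before w and w is an even better candidate under l. The ancestor u of w of
  depth l' w is certified by w under l, by stickiness of l' at u, but not under l'. Hence
  w certifies strictly more nodes under l than under l'.\<close>

lemma find_eq_Some_hd_filter: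
  "filter P xs \<noteq> [] \<Longrightarrow> List.find P xs = Some (hd (filter P xs))"
  by (induction xs) auto

lemma hd_filter_eq_nth_iff:
  assumes "distinct xs" and "i < length xs" and "\<exists>x\<in>set xs. P x"
  shows "hd (filter P xs) = xs ! i \<longleftrightarrow> P (xs ! i) \<and> (\<forall>j<i. \<not> P (xs ! j))"
proof -
  have "filter P xs \<noteq> []" using assms(3) by (simp add: filter_empty_conv)
  then have "hd (filter P xs) = xs ! i \<longleftrightarrow> List.find P xs = Some (xs ! i)"
    by (simp add: find_eq_Some_hd_filter)
  also have "\<dots> \<longleftrightarrow> P (xs ! i) \<and> (\<forall>j<i. \<not> P (xs ! j))"
    using assms(1,2) by (auto simp: find_Some_iff nth_eq_iff_index_eq)
  finally show ?thesis .
qed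

lemma preorder_ne_Nil: "preorder T \<noteq> []"
  by (cases T) simp

lemma distinct_preorder: "distinct (preorder T)"
proof (induction T rule: preorder.induct)
  case (1 ts)
  let ?block = "\<lambda>i. map (Cons i) (preorder (ts ! i))"
  have "inj ?block"
  proof (rule injI)
    fix i j assume "?block i = ?block j"
    then have "hd (?block i) = hd (?block j)" by (rule arg_cong)
    then show "i = j" by (simp add: hd_map preorder_ne_Nil)
  qed
  have "distinct (concat (map ?block [0..<length ts]))"
  proof (rule distinct_concat)
    show "distinct (map ?block [0..<length ts])"
      using \<open>inj ?block\<close> by (simp add: distinct_map inj_on_subset[OF _ subset_UNIV])
    show "distinct ys" if "ys \<in> set (map ?block [0..<length ts])" for ys
      using that "1.IH" by (auto simp: distinct_map)
    show "set ys \<inter> set zs = {}"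
      if "ys \<in> set (map ?block [0..<length ts])" "zs \<in> set (map ?block [0..<length ts])" "ys \<noteq> zs"
      for ys zs using that by auto
  qed
  then show ?case by auto
qed

lemma take_mem_preorder: "v \<in> set (preorder T) \<Longrightarrow> take k v \<in> set (preorder T)"
proof (induction T arbitrary: v k rule: preorder.induct)
  case (1 ts)
  show ?case
  proof (cases "v = [] \<or> k = 0")
    case True
    then show ?thesis by auto
  next
    case False
    then obtain i v' where "i < length ts" "v' \<in> set (preorder (ts ! i))" "v = i # v'"
      using "1.prems" by auto
    moreover obtain k' where "k = Suc k'" using False by (cases k) auto
    ultimately show ?thesis using "1.IH"[of i v' k'] by force
  qed
qed

lemma prefix_mem_nodes: "u @ r \<in> nodes T \<Longrightarrow> u \<in> nodes T"
  unfolding nodes_def using take_mem_preorder[of "u @ r" T "length u"] by simp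

lemma precedes_preorder_nth:
  "i < j \<Longrightarrow> j < length (preorder T) \<Longrightarrow> precedes T (preorder T ! i) (preorder T ! j)"
  unfolding precedes_def by blast

definition cert_candidate :: "ptree \<Rightarrow> (nat list \<Rightarrow> nat) \<Rightarrow> nat list \<Rightarrow> nat list \<Rightarrow> bool" where
  "cert_candidate T l u v \<longleftrightarrow> v \<in> subtree T u \<and> l v < length u"

definition certified :: "ptree \<Rightarrow> (nat list \<Rightarrow> nat) \<Rightarrow> nat list \<Rightarrow> nat list set" where
  "certified T l w = {u \<in> nodes T. u \<noteq> [] \<and> certificate T l u = w}"

lemma certificate_eq_nth_iff:
  assumes "sticky T l" and "u \<in> nodes T" and "u \<noteq> []" and "j < length (preorder T)"
  shows "certificate T l u = preorder T ! j \<longleftrightarrow>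
    cert_candidate T l u (preorder T ! j) \<and> (\<forall>i<j. \<not> cert_candidate T l u (preorder T ! i))"
proof -
  obtain v where "v \<in> subtree T u" and "l v < length u"
    using assms(1-3) unfolding sticky_def by blast
  then have "\<exists>v\<in>set (preorder T). cert_candidate T l u v"
    unfolding cert_candidate_def subtree_def nodes_def by auto
  moreover have "certificate T l u = hd (filter (cert_candidate T l u) (preorder T))"
    unfolding certificate_def cert_candidate_def ..
  ultimately show ?thesis
    using hd_filter_eq_nth_iff[OF distinct_preorder assms(4)] by simp
qed

context
  fixes T :: ptree and l l' :: "nat list \<Rightarrow> nat" and j :: nat
  assumes sticky: "sticky T l" and sticky': "sticky T l'" and j: "j < length (preorder T)"
    and agree: "\<forall>i<j. l (preorder T ! i) = l' (preorder T ! i)"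
    and less: "l (preorder T ! j) < l' (preorder T ! j)"
begin

lemma certified_mono_first_disagreement:
  "certified T l' (preorder T ! j) \<subseteq> certified T l (preorder T ! j)"
proof
  fix u assume "u \<in> certified T l' (preorder T ! j)"
  then have u: "u \<in> nodes T" "u \<noteq> []" and "certificate T l' u = preorder T ! j"
    unfolding certified_def by auto
  then have "cert_candidate T l' u (preorder T ! j)"
    and "\<forall>i<j. \<not> cert_candidate T l' u (preorder T ! i)"
    using certificate_eq_nth_iff[OF sticky' u j] by auto
  then have "cert_candidate T l u (preorder T ! j)"
    and "\<forall>i<j. \<not> cert_candidate T l u (preorder T ! i)"
    using agree less unfolding cert_candidate_def by auto
  then show "u \<in> certified T l (preorder T ! j)"
    using certificate_eq_nth_iff[OF sticky u j] u unfolding certified_def by auto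
qed

lemma ancestor_certified_first_disagreement:
  defines "w \<equiv> preorder T ! j"
  defines "u \<equiv> take (l' w) w"
  shows "u \<in> certified T l w" and "u \<notin> certified T l' w"
proof -
  have w: "w \<in> nodes T" using j unfolding w_def nodes_def by simp
  have "l' w \<le> length w" using sticky' w unfolding sticky_def by blast
  then have depth: "length u = l' w" unfolding u_def by simp
  then have "u \<noteq> []" using less unfolding w_def by auto
  have "w \<in> subtree T u"
    using w unfolding subtree_def u_def by (metis (mono_tags, lifting) append_take_drop_id mem_Collect_eq)
  have "u \<in> nodes T" using w prefix_mem_nodes[of u "drop (l' w) w" T] unfolding u_def by simp
  have "cert_candidate T l u w"
    using \<open>w \<in> subtree T u\<close> depth less unfolding cert_candidate_def w_def by simp
  moreover have "\<not> cert_candidate T l u (preorder T ! i)" if "i < j" for i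
  proof
    assume candidate: "cert_candidate T l u (preorder T ! i)"
    have "precedes T (preorder T ! i) w"
      using precedes_preorder_nth[OF that j] unfolding w_def .
    then have "l' (preorder T ! i) \<ge> length u"
      using sticky' \<open>u \<in> nodes T\<close> \<open>w \<in> subtree T u\<close> depth candidate
      unfolding sticky_def cert_candidate_def by metis
    then show False using candidate agree that unfolding cert_candidate_def by simp
  qed
  ultimately show "u \<in> certified T l w"
    using certificate_eq_nth_iff[OF sticky \<open>u \<in> nodes T\<close> \<open>u \<noteq> []\<close> j]
      \<open>u \<in> nodes T\<close> \<open>u \<noteq> []\<close> unfolding certified_def w_def by simp
  have "\<not> cert_candidate T l' u w" using depth unfolding cert_candidate_def by simp
  then show "u \<notin> certified T l' w"
    using certificate_eq_nth_iff[OF sticky' \<open>u \<in> nodes T\<close> \<open>u \<noteq> []\<close> j]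
    unfolding certified_def w_def by simp
qed

lemma cert_count_less_first_disagreement:
  "cert_count T l' (preorder T ! j) < cert_count T l (preorder T ! j)"
proof -
  have "certified T l' (preorder T ! j) \<subset> certified T l (preorder T ! j)"
    using certified_mono_first_disagreement ancestor_certified_first_disagreement by blast
  moreover have "finite (certified T l (preorder T ! j))"
    unfolding certified_def nodes_def by simp
  ultimately show ?thesis
    unfolding cert_count_def certified_def[symmetric] by (rule psubset_card_mono[rotated])
qed

end

theorem corollary4p4:
  fixes T :: ptree and l l' :: "nat list \<Rightarrow> nat"
  assumes "sticky T l" and "sticky T l'"
    and "\<forall>w\<in>nodes T. cert_count T l w = cert_count T l' w"
  shows "\<forall>u\<in>nodes T. l u = l' u"
proof (rule ccontr)
  let ?differ = "\<lambda>j. j < length (preorder T) \<and> l (preorder T ! j) \<noteq> l' (preorder T ! j)"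
  assume "\<not> (\<forall>u\<in>nodes T. l u = l' u)"
  then have "\<exists>j. ?differ j" unfolding nodes_def by (auto simp: in_set_conv_nth)
  then obtain j where "?differ j" and "\<forall>i<j. \<not> ?differ i"
    by (auto simp: exists_least_iff[of ?differ])
  then have j: "j < length (preorder T)" and agree: "\<forall>i<j. l (preorder T ! i) = l' (preorder T ! i)"
    by auto
  have "cert_count T l (preorder T ! j) \<noteq> cert_count T l' (preorder T ! j)"
    using \<open>?differ j\<close> cert_count_less_first_disagreement[OF assms(1,2) j agree]
      cert_count_less_first_disagreement[OF assms(2,1) j] agree
    by (metis less_irrefl linorder_neqE_nat)
  then show False using assms(3) j unfolding nodes_def by simp
qed

end
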